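(* Consider the discrete-time system $x_{k+1}=f(x_k,u_k,w_k)$, $y_k=h(x_k,v_k)$ ($x\in\mathbb{R}^n$, $u\in\mathbb{R}^m$, $w\in\mathbb{R}^q$, $v\in\mathbb{R}^r$, $y\in\mathbb{R}^p$, $f,h$ continuously differentiable), and suppose there is a diffeomorphism $\phi$ such that $\bar{x}=\phi(x)$ transforms it into $$\bar{x}_{k+1}=f_1(\bar{x}_k,u_k)+Bf_2(w_k,\bar{x}_k,u_k),\qquad y_k=C\bar{x}_k+g(v_k),$$ with $C\in\mathbb{R}^{p\times n}$, $B\in\mathbb{R}^{n\times s}$ and $f_1,f_2,g$ continuously differentiable. If $\operatorname{rank}(CB)=\operatorname{rank}(B)$, then there exist a diffeomorphism $T=(T_\flat,T_\sharp):\mathbb{R}^n\to\mathbb{R}^{n_\flat+n_\sharp}$ and a continuously differentiable $\psi:\mathbb{R}^p\times\mathbb{R}^{n_\sharp}\times\mathbb{R}^r\to\mathbb{R}^{n_\flat}$ such that, writing $z=T(x)=(z^\flat,z^\sharp)$, $f_\sharp(z^\sharp,z^\flat,u,w):=T_\sharp(f(T^{-1}(z),u,w))$ and $h_T(z^\sharp,z^\flat,v):=h(T^{-1}(z),v)$: (a) $z^\flat=\psi(y,z^\sharp,v)$ whenever $y=h_T(z^\sharp,z^\flat,v)$, and (b) $\frac{\partial f_\sharp^i}{\partial w}(z^\sharp,z^\flat,u,w)=0$ for all $i\in\{1,\dots,n_\sharp\}$ and all arguments, where $f^i_\sharp$ is the $i$-th component of $f_\sharp$. *)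

theory Defs
  imports "HOL-Analysis.Analysis"
begin

definition C1 :: "('a::real_normed_vector \<Rightarrow> 'b::real_normed_vector) \<Rightarrow> bool" where
  "C1 F \<longleftrightarrow> (\<exists>F' :: 'a \<Rightarrow> 'a \<Rightarrow>\<^sub>L 'b.
      (\<forall>x. (F has_derivative blinfun_apply (F' x)) (at x)) \<and> continuous_on UNIV F')"

definition diffeo :: "('a::real_normed_vector \<Rightarrow> 'b::real_normed_vector) \<Rightarrow> bool" where
  "diffeo F \<longleftrightarrow> bij F \<and> C1 F \<and> C1 (inv F)"

text \<open>Projection of z onto the sharp coordinates (those not in the flat index set I);
  the flat coordinates are set to 0.\<close>
definition sharp_part :: "'n set \<Rightarrow> real^'n \<Rightarrow> real^'n" where
  "sharp_part I z = (\<chi> i. if i \<in> I then 0 else z $ i)"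

end

theory Submission
  imports Defs
begin

text \<open>Since \<open>rank (C B) = rank B\<close>, the matrix \<open>C\<close> is injective on the range of \<open>B\<close> and so has
  a linear left inverse \<open>M\<close> there. Pick a linear bijection \<open>L\<close> carrying the range of \<open>B\<close> onto
  the coordinate subspace of the coordinates in \<open>I\<close>, and let \<open>T = L \<circ> \<phi>\<close>. The disturbance \<open>w\<close>
  enters the transformed dynamics only through \<open>B\<close>, i.e. only along flat directions, so the sharp
  coordinates of \<open>T \<circ> f\<close> do not depend on \<open>w\<close>. The flat part of \<open>z\<close> lies in \<open>L (range B)\<close>, and
  \<open>y - g v - C L\<^sup>-\<^sup>1 z\<^sup>\<sharp> = C L\<^sup>-\<^sup>1 (z - z\<^sup>\<sharp>)\<close>, so applying \<open>L \<circ> M\<close> recovers it.\<close>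

lemma C1_bounded_linear: "bounded_linear F \<Longrightarrow> C1 F"
  unfolding C1_def
  by (intro exI[of _ "\<lambda>_. Blinfun F"])
    (simp add: bounded_linear_Blinfun_apply bounded_linear_imp_has_derivative)

lemma C1_compose:
  assumes "C1 F" "C1 G"
  shows "C1 (G \<circ> F)"
proof -
  obtain F' where F': "\<And>x. (F has_derivative blinfun_apply (F' x)) (at x)" "continuous_on UNIV F'"
    using assms(1) unfolding C1_def by blast
  obtain G' where G': "\<And>x. (G has_derivative blinfun_apply (G' x)) (at x)" "continuous_on UNIV G'"
    using assms(2) unfolding C1_def by blast
  have "continuous_on UNIV F"
    using F'(1) by (meson continuous_at_imp_continuous_on has_derivative_continuous)
  then have "continuous_on UNIV (G' \<circ> F)"
    using G'(2) by (metis continuous_on_compose continuous_on_subset subset_UNIV)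
  then have "continuous_on UNIV (\<lambda>x. G' (F x) o\<^sub>L F' x)"
    using F'(2) by (intro continuous_intros) (simp_all add: o_def)
  moreover have "((G \<circ> F) has_derivative blinfun_apply (G' (F x) o\<^sub>L F' x)) (at x)" for x
  proof -
    have "blinfun_apply (G' (F x) o\<^sub>L F' x) = (\<lambda>v. G' (F x) (F' x v))"
      by auto
    then show ?thesis
      using diff_chain_at[OF F'(1) G'(1)] by (simp add: o_def)
  qed
  ultimately show ?thesis
    unfolding C1_def by (intro exI[of _ "\<lambda>x. G' (F x) o\<^sub>L F' x"]) blast
qed

lemma C1_diff:
  assumes "C1 F" "C1 G"
  shows "C1 (\<lambda>x. F x - G x)"
proof -
  obtain F' where F': "\<And>x. (F has_derivative blinfun_apply (F' x)) (at x)" "continuous_on UNIV F'"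
    using assms(1) unfolding C1_def by blast
  obtain G' where G': "\<And>x. (G has_derivative blinfun_apply (G' x)) (at x)" "continuous_on UNIV G'"
    using assms(2) unfolding C1_def by blast
  have "((\<lambda>x. F x - G x) has_derivative blinfun_apply (F' x - G' x)) (at x)" for x
  proof -
    have "blinfun_apply (F' x - G' x) = (\<lambda>v. F' x v - G' x v)"
      by (auto simp: blinfun.diff_left)
    then show ?thesis
      using has_derivative_diff[OF F'(1) G'(1)] by simp
  qed
  moreover have "continuous_on UNIV (\<lambda>x. F' x - G' x)"
    using F'(2) G'(2) by (intro continuous_intros)
  ultimately show ?thesis
    unfolding C1_def by (intro exI[of _ "\<lambda>x. F' x - G' x"]) blast
qed

lemma C1_bounded_linear_comp_residual:
  assumes K: "bounded_linear K" and N: "bounded_linear N" and g: "C1 g"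
  shows "C1 (\<lambda>(y, zs, v). K (y - g v - N zs))"
proof -
  have "bounded_linear (\<lambda>p. K (fst p - N (fst (snd p))))"
    by (intro bounded_linear_compose[OF K] bounded_linear_sub bounded_linear_fst
        bounded_linear_compose[OF N] bounded_linear_compose[OF bounded_linear_fst]
        bounded_linear_snd)
  moreover have "C1 (K \<circ> g \<circ> (snd \<circ> snd))"
    by (intro C1_compose g C1_bounded_linear K bounded_linear_snd)
  ultimately have "C1 (\<lambda>p. K (fst p - N (fst (snd p))) - (K \<circ> g \<circ> (snd \<circ> snd)) p)"
    by (rule C1_diff[OF C1_bounded_linear])
  moreover have "K (y - g v - N zs) = K (y - N zs) - K (g v)" for y v zs
    using linear_diff[OF bounded_linear.linear[OF K], of "y - N zs" "g v"] by (simp add: algebra_simps)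
  ultimately show ?thesis
    by (simp add: case_prod_beta')
qed

lemma diffeo_linear_bij:
  fixes L :: "'a::euclidean_space \<Rightarrow> 'a"
  assumes "linear L" "bij L"
  shows "diffeo L"
  using assms inj_linear_imp_inv_linear[of L]
  by (simp add: diffeo_def bij_is_inj C1_bounded_linear linear_linear)

lemma diffeo_compose:
  assumes "diffeo F" "diffeo G"
  shows "diffeo (G \<circ> F)"
  using assms by (simp add: diffeo_def bij_comp o_inv_distrib C1_compose)

lemma subspace_linear_bij_onto_substandard:
  fixes S :: "'a::euclidean_space set"
  assumes "subspace S"
  obtains L :: "'a \<Rightarrow> 'a" and d
  where "linear L" "bij L" "d \<subseteq> Basis" "L ` S = {x. \<forall>i\<in>Basis. i \<notin> d \<longrightarrow> x \<bullet> i = 0}"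
proof -
  obtain Bs where Bs: "Bs \<subseteq> S" "independent Bs" "span Bs = S"
    using basis_subspace_exists[OF assms] by metis
  obtain B where B: "Bs \<subseteq> B" "independent B" "span B = UNIV"
    using maximal_independent_subset_extend[OF _ Bs(2), of UNIV]
    by (metis top.extremum_uniqueI subset_UNIV)
  have "card B = DIM('a)"
    using basis_card_eq_dim[of B UNIV] B by simp
  then have "\<exists>L :: 'a \<Rightarrow> 'a. linear L \<and> L ` B = Basis \<and> L ` UNIV = UNIV \<and> inj_on L UNIV"
    by (intro basis_to_basis_subspace_isomorphism) (simp_all add: B independent_Basis)
  then obtain L :: "'a \<Rightarrow> 'a" where L: "linear L" "L ` B = Basis" "surj L" "inj L"
    by blast
  have Bs_Basis: "L ` Bs \<subseteq> Basis"
    using B(1) L(2) by blast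
  have "L ` S = span (L ` Bs)"
    using span_linear_image[OF L(1)] Bs(3) by metis
  also have "\<dots> = {x. \<forall>i\<in>Basis. i \<notin> L ` Bs \<longrightarrow> x \<bullet> i = 0}"
    using Bs_Basis by (rule span_substd_basis)
  finally show ?thesis
    using L Bs_Basis by (intro that[of L "L ` Bs"]) (auto simp: bij_def)
qed

text \<open>The paper's \<open>z\<^sup>\<flat>\<close> is modelled by \<open>z - sharp_part I z\<close>, an element of this subspace.\<close>

definition flat_subspace :: "'n set \<Rightarrow> (real^'n) set" where
  "flat_subspace I = {x. \<forall>i. i \<notin> I \<longrightarrow> x $ i = 0}"

lemma diff_sharp_part_in_flat_subspace: "z - sharp_part I z \<in> flat_subspace I"
  by (simp add: flat_subspace_def sharp_part_def)

lemma subspace_linear_bij_onto_flat_subspace: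
  fixes S :: "(real^'n) set"
  assumes "subspace S"
  obtains L :: "real^'n \<Rightarrow> real^'n" and I where "linear L" "bij L" "L ` S = flat_subspace I"
proof -
  obtain L :: "real^'n \<Rightarrow> real^'n" and d where L: "linear L" "bij L" "d \<subseteq> Basis"
    and LS: "L ` S = {x. \<forall>i\<in>Basis. i \<notin> d \<longrightarrow> x \<bullet> i = 0}"
    by (rule subspace_linear_bij_onto_substandard[OF assms])
  have "L ` S = flat_subspace {i. axis i 1 \<in> d}"
    unfolding LS flat_subspace_def by (auto simp: Basis_vec_def inner_axis)
  with L that show ?thesis by blast
qed

lemma inj_on_if_dim_image_eq:
  fixes f :: "'a::euclidean_space \<Rightarrow> 'b::euclidean_space"
  assumes f: "linear f" and S: "subspace S" and dim_eq: "dim (f ` S) = dim S"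
  shows "inj_on f S"
proof -
  obtain Bs where Bs: "finite Bs" "Bs \<subseteq> S" "independent Bs" "span Bs = S" "card Bs = dim S"
    using basis_subspace_exists[OF S] by metis
  have span_image: "span (f ` Bs) = f ` S"
    using span_linear_image[OF f, of Bs] Bs(4) by simp
  have "dim (f ` S) \<le> card (f ` Bs)"
    using dim_le_card[of "f ` S" "f ` Bs"] span_image Bs(1) span_superset by auto
  moreover have "card (f ` Bs) \<le> card Bs"
    using Bs(1) card_image_le by blast
  ultimately have card_image: "card (f ` Bs) = card Bs" "card (f ` Bs) = dim (f ` S)"
    using dim_eq Bs(5) by auto
  have "independent (f ` Bs)"
    using card_eq_dim[of "f ` Bs" "f ` S"] card_image(2) Bs(1,2) span_image span_superset by auto
  moreover have "inj_on f Bs"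
    using eq_card_imp_inj_on[OF Bs(1) card_image(1)] .
  ultimately show ?thesis
    using linear_inj_on_span_iff_independent_image[OF f] Bs(4) by metis
qed

lemma rank_mult_eq_left_inverse_on_range:
  fixes A :: "real^'n^'m" and B :: "real^'k^'n"
  assumes "rank (A ** B) = rank B"
  obtains M where "linear M" "\<And>s. s \<in> range ((*v) B) \<Longrightarrow> M (A *v s) = s"
proof -
  have S: "subspace (range ((*v) B))"
    by (simp add: linear_subspace_image)
  have span: "span (range ((*v) B)) = range ((*v) B)"
    using S by simp
  have "dim ((*v) A ` range ((*v) B)) = dim (range ((*v) B))"
    using assms by (simp add: rank_dim_range image_image matrix_vector_mul_assoc)
  then have "inj_on ((*v) A) (span (range ((*v) B)))"
    unfolding span by (rule inj_on_if_dim_image_eq[OF matrix_vector_mul_linear S])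
  then obtain M where "linear M" "\<forall>s\<in>span (range ((*v) B)). M (A *v s) = s"
    using linear_inj_on_left_inverse[OF matrix_vector_mul_linear] by blast
  with that show ?thesis
    unfolding span by blast
qed

lemma flat_coordinates_from_output:
  fixes L :: "real^'n \<Rightarrow> real^'n" and C :: "real^'n^'p"
  assumes L: "linear L" "bij L" and LS: "L ` S = flat_subspace I"
    and M: "\<And>s. s \<in> S \<Longrightarrow> M (C *v s) = s" and "i \<in> I"
  shows "z $ i = L (M (C *v inv L z - C *v inv L (sharp_part I z))) $ i"
proof -
  have "z - sharp_part I z \<in> L ` S"
    using diff_sharp_part_in_flat_subspace LS by simp
  then obtain s where s: "s \<in> S" "z - sharp_part I z = L s"
    by blast
  have "linear (inv L)"
    using L inj_linear_imp_inv_linear bij_is_inj by blast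
  then have "inv L z - inv L (sharp_part I z) = inv L (z - sharp_part I z)"
    by (simp add: linear_diff)
  also have "\<dots> = s"
    using s(2) L(2) by (simp add: bij_is_inj)
  finally have "C *v inv L z - C *v inv L (sharp_part I z) = C *v s"
    by (simp flip: matrix_vector_mult_diff_distrib)
  then have "L (M (C *v inv L z - C *v inv L (sharp_part I z))) = z - sharp_part I z"
    using M s by simp
  then show ?thesis
    using \<open>i \<in> I\<close> by (simp add: sharp_part_def)
qed

lemma sharp_coordinate_add_flat:
  assumes "linear L" "L ` S = flat_subspace I" "s \<in> S" "i \<notin> I"
  shows "L (a + s) $ i = L a $ i"
proof -
  have "L s \<in> flat_subspace I"
    using assms(2,3) by blast
  then show ?thesis
    using assms(1,4) by (simp add: linear_add flat_subspace_def)
qed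

theorem proposition1:
  fixes f :: "real^'n \<Rightarrow> real^'m \<Rightarrow> real^'q \<Rightarrow> real^'n"
    and h :: "real^'n \<Rightarrow> real^'r \<Rightarrow> real^'p"
    and \<phi> :: "real^'n \<Rightarrow> real^'n"
    and f1 :: "real^'n \<Rightarrow> real^'m \<Rightarrow> real^'n"
    and f2 :: "real^'q \<Rightarrow> real^'n \<Rightarrow> real^'m \<Rightarrow> real^'s"
    and g :: "real^'r \<Rightarrow> real^'p"
    and C :: "real^'n^'p"
    and B :: "real^'s^'n"
  assumes f_C1: "C1 (\<lambda>(x, u, w). f x u w)"
    and h_C1: "C1 (\<lambda>(x, v). h x v)"
    and phi_diffeo: "diffeo \<phi>"
    and f1_C1: "C1 (\<lambda>(xb, u). f1 xb u)"
    and f2_C1: "C1 (\<lambda>(w, xb, u). f2 w xb u)"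
    and g_C1: "C1 g"
    and f_transf: "\<And>x u w. \<phi> (f x u w) = f1 (\<phi> x) u + B *v f2 w (\<phi> x) u"
    and h_transf: "\<And>x v. h x v = C *v \<phi> x + g v"
    and rank_cond: "rank (C ** B) = rank B"
  shows "\<exists>(T :: real^'n \<Rightarrow> real^'n) (I :: 'n set)
            (\<psi> :: (real^'p) \<times> (real^'n) \<times> (real^'r) \<Rightarrow> real^'n).
           diffeo T \<and> C1 \<psi> \<and>
           (\<forall>z v y. y = h (inv T z) v \<longrightarrow>
                (\<forall>i\<in>I. z $ i = \<psi> (y, sharp_part I z, v) $ i)) \<and>
           (\<forall>i. i \<notin> I \<longrightarrow> (\<forall>z u w.
                ((\<lambda>w'. T (f (inv T z) u w') $ i) has_derivative (\<lambda>_. 0)) (at w)))"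
proof -
  have "subspace (range ((*v) B))"
    by (simp add: linear_subspace_image)
  then obtain L :: "real^'n \<Rightarrow> real^'n" and I
    where L: "linear L" "bij L" and LB: "L ` range ((*v) B) = flat_subspace I"
    by (rule subspace_linear_bij_onto_flat_subspace)
  obtain M where M: "linear M" "\<And>s. s \<in> range ((*v) B) \<Longrightarrow> M (C *v s) = s"
    using rank_mult_eq_left_inverse_on_range[OF rank_cond] by blast
  define T where "T = L \<circ> \<phi>"
  define \<psi> where "\<psi> = (\<lambda>(y, zs, v). L (M (y - g v - C *v inv L zs)))"
  have L_inv: "linear (inv L)"
    using L inj_linear_imp_inv_linear bij_is_inj by blast
  have "diffeo T"
    unfolding T_def using diffeo_compose[OF phi_diffeo diffeo_linear_bij[OF L]] .
  moreover have "C1 \<psi>"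
    using C1_bounded_linear_comp_residual[OF _ _ g_C1, of "L \<circ> M" "(*v) C \<circ> inv L"]
      linear_compose[OF M(1) L(1)] linear_compose[OF L_inv matrix_vector_mul_linear[of C]]
    by (simp add: \<psi>_def o_def linear_linear)
  moreover have "z $ i = \<psi> (y, sharp_part I z, v) $ i"
    if "y = h (inv T z) v" "i \<in> I" for z v y i
  proof -
    have "\<phi> (inv T z) = inv L z"
      using phi_diffeo L(2) by (simp add: T_def diffeo_def o_inv_distrib bij_is_surj surj_f_inv_f)
    then have "y - g v = C *v inv L z"
      using that(1) by (simp add: h_transf)
    then show ?thesis
      using flat_coordinates_from_output[OF L LB M(2) that(2)] by (simp add: \<psi>_def)
  qed
  moreover have "((\<lambda>w'. T (f (inv T z) u w') $ i) has_derivative (\<lambda>_. 0)) (at w)"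
    if "i \<notin> I" for i z u w
  proof -
    \<comment> \<open>These components are constant in \<open>w\<close>.\<close>
    have "T (f x u w') $ i = L (f1 (\<phi> x) u) $ i" for x w'
      using sharp_coordinate_add_flat[OF L(1) LB rangeI that] by (simp add: T_def f_transf)
    then show ?thesis
      by simp
  qed
  ultimately show ?thesis
    by (intro exI[of _ T] exI[of _ I] exI[of _ \<psi>]) blast
qed

end
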